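(* For every integer $n\ge 0$, there exist two DFAs, each with at most $n+1$ states, over an alphabet of cardinality $\frac{n(n+1)}{2}+1$, such that there is a tower of height $2^{n}$ between their languages and there is no infinite tower between their languages.
   Context: For strings $v=a_1\cdots a_k$ and $w$, $v\preccurlyeq w$ if $w\in\Sigma^*a_1\Sigma^*a_2\Sigma^*\cdots\Sigma^*a_k\Sigma^*$. A sequence $(w_i)_{i=1}^r$ of strings is a tower between languages $K$ and $L$ if $w_1\in K\cup L$ and for all $i=1,\dots,r-1$: $w_i\preccurlyeq w_{i+1}$, $w_i\in K$ implies $w_{i+1}\in L$, and $w_i\in L$ implies $w_{i+1}\in K$; $r$ is its height. An infinite tower is an infinite sequence with the same properties. *)

theory Defs
  imports "HOL-Library.Sublist"
begin

definition is_dfa :: "'q set \<Rightarrow> 'a set \<Rightarrow> ('q \<Rightarrow> 'a \<Rightarrow> 'q) \<Rightarrow> 'q \<Rightarrow> 'q set \<Rightarrow> bool" where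
  "is_dfa Q Sig delta q0 F \<longleftrightarrow>
     finite Q \<and> finite Sig \<and> q0 \<in> Q \<and> F \<subseteq> Q \<and>
     (\<forall>q\<in>Q. \<forall>a\<in>Sig. delta q a \<in> Q)"

definition dfa_lang :: "'a set \<Rightarrow> ('q \<Rightarrow> 'a \<Rightarrow> 'q) \<Rightarrow> 'q \<Rightarrow> 'q set \<Rightarrow> 'a list set" where
  "dfa_lang Sig delta q0 F = {w. set w \<subseteq> Sig \<and> foldl delta q0 w \<in> F}"

text \<open>A (finite) tower between K and L; its height is the length of the list.
The scattered-subword relation is the library's subseq.\<close>
definition is_tower :: "'a list set \<Rightarrow> 'a list set \<Rightarrow> 'a list list \<Rightarrow> bool" where
  "is_tower K L ws \<longleftrightarrow> ws \<noteq> [] \<and> hd ws \<in> K \<union> L \<and>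
     (\<forall>i. Suc i < length ws \<longrightarrow>
        subseq (ws ! i) (ws ! Suc i) \<and>
        (ws ! i \<in> K \<longrightarrow> ws ! Suc i \<in> L) \<and>
        (ws ! i \<in> L \<longrightarrow> ws ! Suc i \<in> K))"

definition is_infinite_tower :: "'a list set \<Rightarrow> 'a list set \<Rightarrow> (nat \<Rightarrow> 'a list) \<Rightarrow> bool" where
  "is_infinite_tower K L w \<longleftrightarrow> w 0 \<in> K \<union> L \<and>
     (\<forall>i. subseq (w i) (w (Suc i)) \<and>
        (w i \<in> K \<longrightarrow> w (Suc i) \<in> L) \<and>
        (w i \<in> L \<longrightarrow> w (Suc i) \<in> K))"

end

theory Submission
  imports Defs
begin

(* For n >= 2 the two languages K_n and L_n over the letters 1..n are built level by level:
   K_(n+1) = K_n + K_n (n+1) {1..n}^* and likewise for L, starting from K_2 = eps + 2 1^* and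
   L_2 = 1 (2 1)^*.  A tower w_1, ..., w_h from eps to L_n doubles to the tower
   w_1, ..., w_h, w_1 (n+1) w_h, ..., w_h (n+1) w_h of level n+1.  Conversely, in an infinite
   tower of level n+1 the letter n+1 eventually occurs in every word, and exactly once; cutting
   each word before it yields an infinite tower of level n, and at level 2 there is none.
   Both families are accepted by DFAs with states 0..n in which a state q >= 3 records the largest
   letter read so far; the letters of the alphabet beyond n lead to a sink.  For n <= 1 two DFAs
   with a constant transition function suffice. *)

lemma takeWhile_neq_notin: "c \<notin> set x \<Longrightarrow> takeWhile (\<lambda>a. a \<noteq> c) x = x"
  by (induction x) auto

lemma takeWhile_neq_append_Cons: "c \<notin> set u \<Longrightarrow> takeWhile (\<lambda>a. a \<noteq> c) (u @ c # z) = u"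
  by (induction u) auto

lemma set_subseq: "subseq xs ys \<Longrightarrow> set xs \<subseteq> set ys"
  by (auto dest: list_emb_set)

lemma subseq_prefix_before_letter:
  assumes "subseq (u @ c # v) (u' @ c # v')" and "c \<notin> set u'" and "c \<notin> set v'"
  shows "subseq u u'"
proof -
  have "subseq (u @ [c]) (u @ c # v)" by (simp add: subseq_append')
  then have "subseq (u @ [c]) (u' @ c # v')"
    using assms(1) by (rule subseq_order.order_trans)
  then obtain x1 x2 where split: "u @ [c] = x1 @ x2" and x1: "subseq x1 u'" and x2: "subseq x2 (c # v')"
    by (rule subseq_appendE)
  have "c \<notin> set x1" using set_subseq[OF x1] assms(2) by blast
  with split obtain u2 where u: "u = x1 @ u2" and x2_eq: "x2 = u2 @ [c]"
    by (auto simp: append_eq_append_conv2 Cons_eq_append_conv)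
  have "u2 = []"
  proof (rule ccontr)
    assume "u2 \<noteq> []"
    then obtain a u3 where "u2 = a # u3" by (cases u2) auto
    then have "subseq (u3 @ [c]) v'"
      using x2 x2_eq by (auto split: if_splits dest: subseq_Cons')
    then show False using set_subseq assms(3) by fastforce
  qed
  then show ?thesis using u x1 by simp
qed

definition tower_step :: "'a list set \<Rightarrow> 'a list set \<Rightarrow> 'a list \<Rightarrow> 'a list \<Rightarrow> bool" where
  "tower_step K L x y \<longleftrightarrow> subseq x y \<and> (x \<in> K \<longrightarrow> y \<in> L) \<and> (x \<in> L \<longrightarrow> y \<in> K)"

lemma is_tower_iff_successively:
  "is_tower K L ws \<longleftrightarrow> ws \<noteq> [] \<and> hd ws \<in> K \<union> L \<and> successively (tower_step K L) ws"
  by (simp add: is_tower_def tower_step_def successively_conv_nth)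

lemma is_tower_nth:
  assumes "is_tower K L ws" and "i < length ws"
  shows "ws ! i \<in> K \<union> L"
  using assms(2)
proof (induction i)
  case 0
  then show ?case using assms(1) by (simp add: is_tower_def hd_conv_nth)
next
  case (Suc i)
  then show ?case using assms(1) unfolding is_tower_def by auto
qed

lemma is_tower_set: "is_tower K L ws \<Longrightarrow> set ws \<subseteq> K \<union> L"
  by (auto simp: in_set_conv_nth dest: is_tower_nth)

lemma is_infinite_tower_mem: "is_infinite_tower K L w \<Longrightarrow> w i \<in> K \<union> L"
  by (induction i) (auto simp: is_infinite_tower_def)

lemma is_infinite_tower_subseq:
  assumes "is_infinite_tower K L w" and "i \<le> j"
  shows "subseq (w i) (w j)"
  using assms(2)
proof (induction j rule: dec_induct)
  case (step j)
  then show ?case using assms(1) subseq_order.order_trans unfolding is_infinite_tower_def by blast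
qed simp

lemma is_infinite_tower_shift:
  "is_infinite_tower K L w \<Longrightarrow> is_infinite_tower K L (\<lambda>i. w (m + i))"
  using is_infinite_tower_mem[of K L w m] by (simp add: is_infinite_tower_def)

lemma is_infinite_tower_image:
  assumes "is_infinite_tower K L w" and "K' \<inter> L' = {}" and "f ` K \<subseteq> K'" and "f ` L \<subseteq> L'"
    and "\<And>i. subseq (f (w i)) (f (w (Suc i)))"
  shows "is_infinite_tower K' L' (\<lambda>i. f (w i))"
proof -
  have "f (w i) \<in> K' \<longleftrightarrow> w i \<in> K" "f (w i) \<in> L' \<longleftrightarrow> w i \<in> L" for i
    using is_infinite_tower_mem[OF assms(1), of i] assms(2-4) by blast+
  then show ?thesis
    using assms(1,5) unfolding is_infinite_tower_def by auto
qed

lemma no_infinite_tower_if_K_Nil: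
  assumes "\<And>x y. x \<in> K \<Longrightarrow> y \<in> L \<Longrightarrow> x = []" and "[] \<notin> L"
  shows "\<not> is_infinite_tower K L w"
proof
  assume tower: "is_infinite_tower K L w"
  obtain j where j: "w j \<in> L"
    using is_infinite_tower_mem[OF tower, of 0] tower unfolding is_infinite_tower_def by blast
  then have "w (Suc j) = []"
    using tower assms(1) unfolding is_infinite_tower_def by blast
  then have "w j = []"
    using tower unfolding is_infinite_tower_def by (metis list_emb_Nil2)
  then show False using j assms(2) by simp
qed

lemma no_infinite_tower_two_letters:
  assumes "a \<noteq> b" and K: "K \<subseteq> insert [] (range (\<lambda>k. b # replicate k a))"
    and L: "L \<subseteq> range ((#) a)"
  shows "\<not> is_infinite_tower K L w"
proof
  assume tower: "is_infinite_tower K L w"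
  have next_L: "w i \<in> K \<Longrightarrow> w (Suc i) \<in> L" and next_K: "w i \<in> L \<Longrightarrow> w (Suc i) \<in> K"
    and sub: "subseq (w i) (w (Suc i))" for i
    using tower by (simp_all add: is_infinite_tower_def)
  obtain j where j: "w j \<in> L"
    using is_infinite_tower_mem[OF tower, of 0] next_L by blast
  have "w j \<noteq> []" using j L by auto
  then have "w (Suc j) \<noteq> []" using sub[of j] by auto
  then have "b \<in> set (w (Suc j))" using next_K[OF j] K by auto
  then have "b \<in> set (w (Suc (Suc j)))" using set_subseq[OF sub] by blast
  moreover obtain r where "w (Suc (Suc j)) = a # r"
    using next_L[OF next_K[OF j]] L by auto
  ultimately have "subseq [a, b] (w (Suc (Suc j)))"
    using \<open>a \<noteq> b\<close> by (simp add: subseq_singleton_left)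
  then have "subseq [a, b] (w (Suc (Suc (Suc j))))"
    using sub subseq_order.order_trans by blast
  moreover have "w (Suc (Suc (Suc j))) \<in> K" using next_K next_L j by blast
  moreover have "\<not> subseq [a, b] (b # replicate k a)" for k
    using \<open>a \<noteq> b\<close> set_subseq[of "[b]" "replicate k a"] by (auto dest: subseq_Cons')
  ultimately show False using K by auto
qed

definition extend_lang :: "nat \<Rightarrow> nat list set \<Rightarrow> nat list set" where
  "extend_lang n M = M \<union> {u @ Suc n # z | u z. u \<in> M \<and> set z \<subseteq> {1..n}}"

lemma subset_extend_lang: "M \<subseteq> extend_lang n M"
  by (auto simp: extend_lang_def)

lemma Suc_notin_lists: "x \<in> lists {1..n} \<Longrightarrow> Suc n \<notin> set x"
  by auto

lemma extend_lang_cases: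
  assumes "M \<subseteq> lists {1..n}" and "x \<in> extend_lang n M"
  obtains "x \<in> M" and "Suc n \<notin> set x"
  | u z where "x = u @ Suc n # z" and "u \<in> M" and "Suc n \<notin> set u" and "set z \<subseteq> {1..n}"
proof -
  have "Suc n \<notin> set u" if "u \<in> M" for u
    using that assms(1) Suc_notin_lists by blast
  then show ?thesis using assms(2) that unfolding extend_lang_def by blast
qed

lemma extend_lang_takeWhile:
  assumes "M \<subseteq> lists {1..n}" and "x \<in> extend_lang n M"
  shows "takeWhile (\<lambda>a. a \<noteq> Suc n) x \<in> M"
  using assms by (cases rule: extend_lang_cases) (simp_all add: takeWhile_neq_notin takeWhile_neq_append_Cons)

lemma append_Cons_mem_extend_lang_iff:
  assumes "M \<subseteq> lists {1..n}" and "set u \<subseteq> {1..n}" and "set z \<subseteq> {1..n}"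
  shows "u @ Suc n # z \<in> extend_lang n M \<longleftrightarrow> u \<in> M"
proof
  assume "u @ Suc n # z \<in> extend_lang n M"
  then have "takeWhile (\<lambda>a. a \<noteq> Suc n) (u @ Suc n # z) \<in> M"
    by (rule extend_lang_takeWhile[OF assms(1)])
  moreover have "takeWhile (\<lambda>a. a \<noteq> Suc n) (u @ Suc n # z) = u"
    using assms(2) by (auto intro: takeWhile_neq_append_Cons)
  ultimately show "u \<in> M" by simp
qed (use assms(3) in \<open>auto simp: extend_lang_def\<close>)

lemma extend_lang_old_word_iff:
  assumes "M \<subseteq> lists {1..n}" and "set x \<subseteq> {1..n}"
  shows "x \<in> extend_lang n M \<longleftrightarrow> x \<in> M"
proof
  assume "x \<in> extend_lang n M"
  then have "takeWhile (\<lambda>a. a \<noteq> Suc n) x \<in> M"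
    by (rule extend_lang_takeWhile[OF assms(1)])
  moreover have "Suc n \<notin> set x" using assms(2) by auto
  ultimately show "x \<in> M" by (simp add: takeWhile_neq_notin)
qed (rule subsetD[OF subset_extend_lang])

lemma extend_lang_disjoint:
  assumes "K \<subseteq> lists {1..n}" and "L \<subseteq> lists {1..n}" and "K \<inter> L = {}"
  shows "extend_lang n K \<inter> extend_lang n L = {}"
  using extend_lang_takeWhile[OF assms(1)] extend_lang_takeWhile[OF assms(2)] assms(3) by blast

lemma subseq_takeWhile_extend_lang:
  assumes "M \<subseteq> lists {1..n}" and "y \<in> extend_lang n M" and "subseq x y"
    and "Suc n \<in> set x \<longleftrightarrow> Suc n \<in> set y"
  shows "subseq (takeWhile (\<lambda>a. a \<noteq> Suc n) x) (takeWhile (\<lambda>a. a \<noteq> Suc n) y)"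
proof (cases "Suc n \<in> set y")
  case False
  then show ?thesis using assms(3,4) by (simp add: takeWhile_neq_notin)
next
  case True
  from assms(1,2) obtain u' z' where y: "y = u' @ Suc n # z'" "Suc n \<notin> set u'" "set z' \<subseteq> {1..n}"
  proof (cases rule: extend_lang_cases)
    case 1
    then show ?thesis using True by simp
  qed
  obtain u v where x: "x = u @ Suc n # v" "Suc n \<notin> set u"
    using True assms(4) split_list_first[of "Suc n" x] by blast
  have z': "Suc n \<notin> set z'" using y(3) by auto
  have "subseq (u @ Suc n # v) (u' @ Suc n # z')"
    using assms(3) x y by simp
  then have "subseq u u'"
    using y(2) z' by (rule subseq_prefix_before_letter)
  then show ?thesis by (simp add: x y takeWhile_neq_append_Cons)
qed

lemma is_tower_double:
  assumes K: "K \<subseteq> lists {1..n}" and L: "L \<subseteq> lists {1..n}" and disj: "K \<inter> L = {}"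
    and "[] \<in> K" and tower: "is_tower K L ws" and "hd ws = []" and "last ws \<in> L"
  shows "is_tower (extend_lang n K) (extend_lang n L) (ws @ map (\<lambda>u. u @ Suc n # last ws) ws)"
proof -
  let ?K' = "extend_lang n K" and ?L' = "extend_lang n L" and ?z = "last ws"
  have ws: "ws \<noteq> []" "set ws \<subseteq> K \<union> L" "successively (tower_step K L) ws"
    using tower is_tower_set by (auto simp: is_tower_iff_successively)
  have z: "set ?z \<subseteq> {1..n}" using \<open>last ws \<in> L\<close> L by (auto simp: in_lists_conv_set)
  have old_mem: "x \<in> extend_lang n M \<longleftrightarrow> x \<in> M"
    if "M \<subseteq> lists {1..n}" "x \<in> K \<union> L" for M x
    using that K L by (intro extend_lang_old_word_iff) (auto simp: in_lists_conv_set)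
  have lift_mem: "u @ Suc n # ?z \<in> extend_lang n M \<longleftrightarrow> u \<in> M"
    if "M \<subseteq> lists {1..n}" "u \<in> K \<union> L" for M u
    using that K L z by (intro append_Cons_mem_extend_lang_iff) (auto simp: in_lists_conv_set)
  have first_half: "successively (tower_step ?K' ?L') ws"
    using ws(3)
  proof (rule successively_mono)
    fix x y assume "x \<in> set ws" "y \<in> set ws" "tower_step K L x y"
    then show "tower_step ?K' ?L' x y"
      using ws(2) old_mem[OF K] old_mem[OF L] by (auto simp: tower_step_def)
  qed
  have second_half: "successively (tower_step ?K' ?L') (map (\<lambda>u. u @ Suc n # ?z) ws)"
    unfolding successively_map using ws(3)
  proof (rule successively_mono)
    fix x y assume "x \<in> set ws" "y \<in> set ws" "tower_step K L x y"
    then show "tower_step ?K' ?L' (x @ Suc n # ?z) (y @ Suc n # ?z)"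
      using ws(2) lift_mem[OF K] lift_mem[OF L] by (auto simp: tower_step_def)
  qed
  have "?z \<notin> ?K'"
    using \<open>last ws \<in> L\<close> extend_lang_disjoint[OF K L disj] subset_extend_lang by blast
  moreover have "subseq ?z (Suc n # ?z)"
    by (rule list_emb.list_emb_Cons) (rule subseq_order.order_refl)
  ultimately have junction: "tower_step ?K' ?L' (last ws) (hd (map (\<lambda>u. u @ Suc n # ?z) ws))"
    using \<open>[] \<in> K\<close> \<open>hd ws = []\<close> ws(1) lift_mem[OF K, of "[]"]
    by (simp add: tower_step_def hd_map)
  have "hd ws \<in> ?K' \<union> ?L'"
    using ws(1,2) subset_extend_lang hd_in_set by blast
  then show ?thesis
    using ws(1) first_half second_half junction by (simp add: is_tower_iff_successively successively_append_iff)
qed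

lemma no_infinite_tower_extend_lang:
  assumes K: "K \<subseteq> lists {1..n}" and L: "L \<subseteq> lists {1..n}" and disj: "K \<inter> L = {}"
    and no_tower: "\<not> (\<exists>w. is_infinite_tower K L w)"
  shows "\<not> is_infinite_tower (extend_lang n K) (extend_lang n L) w"
proof
  assume tower: "is_infinite_tower (extend_lang n K) (extend_lang n L) w"
  define cut where "cut = takeWhile (\<lambda>a. a \<noteq> Suc n)"
  obtain m where stable: "\<And>i. Suc n \<in> set (w (m + i)) \<longleftrightarrow> Suc n \<in> set (w m)"
  proof (cases "\<exists>m. Suc n \<in> set (w m)")
    case True
    then obtain m where "Suc n \<in> set (w m)" by blast
    moreover have "Suc n \<in> set (w (m + i))" if "Suc n \<in> set (w m)" for i
      using is_infinite_tower_subseq[OF tower, of m "m + i"] that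
      by (simp add: subseq_singleton_left[symmetric])
    ultimately show ?thesis using that by blast
  next
    case False
    then show ?thesis using that[of 0] by auto
  qed
  have "is_infinite_tower K L (\<lambda>i. cut (w (m + i)))"
  proof (rule is_infinite_tower_image[OF is_infinite_tower_shift[OF tower] disj])
    show "cut ` extend_lang n K \<subseteq> K" "cut ` extend_lang n L \<subseteq> L"
      using extend_lang_takeWhile[OF K] extend_lang_takeWhile[OF L] by (auto simp: cut_def)
    fix i
    have "w (m + Suc i) \<in> extend_lang n K \<union> extend_lang n L"
      by (rule is_infinite_tower_mem[OF tower])
    moreover have "subseq (w (m + i)) (w (m + Suc i))"
      using tower by (simp add: is_infinite_tower_def)
    moreover have "Suc n \<in> set (w (m + i)) \<longleftrightarrow> Suc n \<in> set (w (m + Suc i))"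
      using stable by blast
    ultimately show "subseq (cut (w (m + i))) (cut (w (m + Suc i)))"
      using subseq_takeWhile_extend_lang[OF K] subseq_takeWhile_extend_lang[OF L]
      unfolding cut_def by blast
  qed
  then show False using no_tower by blast
qed

locale lifted_dfa =
  fixes d :: "nat \<Rightarrow> nat \<Rightarrow> nat" and F :: "nat set" and s :: nat
  assumes base_closed: "q < 3 \<Longrightarrow> a \<in> {1, 2} \<Longrightarrow> d q a < 3"
    and final_base: "F \<subseteq> {..<3}"
    and sink_base: "s < 3"
    and sink_not_final: "s \<notin> F"
begin

text \<open>The states \<open>0, 1, 2\<close> run the base automaton \<open>d\<close> on the letters \<open>1, 2\<close>,
  with sink \<open>s\<close> and final states \<open>F\<close>.\<close>

definition step :: "nat \<Rightarrow> nat \<Rightarrow> nat" where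
  "step q a =
    (if q = s then s
     else if q < 3 then (if a < 3 then d q a else if q \<in> F then a else s)
     else if a < q then q else if a = q then s else a)"

definition lang :: "nat \<Rightarrow> nat list set" where
  "lang n = {w. set w \<subseteq> {1..n} \<and> foldl step 0 w \<in> F \<union> {3..}}"

lemma lang_lists: "lang n \<subseteq> lists {1..n}"
  by (auto simp: lang_def)

lemma foldl_step_sink: "foldl step s w = s"
  by (induction w) (simp_all add: step_def)

lemma step_record: "3 \<le> q \<Longrightarrow> a \<le> q \<Longrightarrow> step q a = (if a = q then s else q)"
  using sink_base by (simp add: step_def)

lemma foldl_step_record:
  assumes "3 \<le> q" and "set v \<subseteq> {..q}"
  shows "foldl step q v = (if q \<in> set v then s else q)"
  using assms(2) by (induction v) (auto simp: assms(1) step_record foldl_step_sink)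

lemma step_le:
  assumes "2 \<le> n" and "q \<le> n" and "a \<in> {1..n}"
  shows "step q a \<le> n"
proof -
  have "a < 3 \<Longrightarrow> a \<in> {1, 2}" using assms(3) by auto
  then show ?thesis using assms base_closed[of q a] sink_base by (auto simp: step_def)
qed

lemma foldl_step_le: "2 \<le> n \<Longrightarrow> q \<le> n \<Longrightarrow> set w \<subseteq> {1..n} \<Longrightarrow> foldl step q w \<le> n"
  by (induction w arbitrary: q) (simp_all add: step_le)

lemma step_new_letter:
  assumes "2 \<le> n" and "q \<le> n"
  shows "step q (Suc n) = (if q \<in> F \<union> {3..} then Suc n else s)"
  using assms final_base sink_base sink_not_final by (auto simp: step_def)

lemma foldl_step_new_letter:
  assumes "2 \<le> n" and "set u \<subseteq> {1..n}" and "set v \<subseteq> {..Suc n}"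
  shows "foldl step 0 (u @ Suc n # v) \<in> F \<union> {3..} \<longleftrightarrow> u \<in> lang n \<and> Suc n \<notin> set v"
proof -
  define q where "q = foldl step 0 u"
  have "q \<le> n" using foldl_step_le[OF assms(1) _ assms(2)] by (simp add: q_def)
  then have "foldl step 0 (u @ Suc n # v) =
      (if q \<in> F \<union> {3..} then (if Suc n \<in> set v then s else Suc n) else s)"
    using assms by (simp add: q_def step_new_letter foldl_step_record foldl_step_sink)
  then show ?thesis
    using assms(1,2) sink_base sink_not_final by (simp add: lang_def q_def)
qed

lemma lang_Suc:
  assumes "2 \<le> n"
  shows "lang (Suc n) = extend_lang n (lang n)"
proof (intro set_eqI iffI)
  fix w assume w: "w \<in> lang (Suc n)"
  then have w_letters: "set w \<subseteq> insert (Suc n) {1..n}"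
    by (simp add: lang_def atLeastAtMostSuc_conv)
  show "w \<in> extend_lang n (lang n)"
  proof (cases "Suc n \<in> set w")
    case False
    then have "w \<in> lang n" using w w_letters by (simp add: lang_def subset_insert)
    then show ?thesis using subset_extend_lang by blast
  next
    case True
    then obtain u v where w_split: "w = u @ Suc n # v" and "Suc n \<notin> set u"
      using split_list_first by metis
    have u: "set u \<subseteq> {1..n}" and v: "set v \<subseteq> {..Suc n}"
      using w_letters \<open>Suc n \<notin> set u\<close> by (auto simp: w_split subset_insert)
    have "foldl step 0 (u @ Suc n # v) \<in> F \<union> {3..}"
      using w by (simp only: lang_def w_split mem_Collect_eq)
    then have "u \<in> lang n" and "Suc n \<notin> set v"
      using foldl_step_new_letter[OF assms u v] by blast+
    moreover have "set v \<subseteq> {1..n}"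
      using w_letters \<open>Suc n \<notin> set v\<close> by (auto simp: w_split subset_insert)
    ultimately show ?thesis by (auto simp: extend_lang_def w_split)
  qed
next
  fix w assume "w \<in> extend_lang n (lang n)"
  then consider "w \<in> lang n" | u z where "w = u @ Suc n # z" "u \<in> lang n" "set z \<subseteq> {1..n}"
    by (auto simp: extend_lang_def)
  then show "w \<in> lang (Suc n)"
  proof cases
    case 1
    then show ?thesis by (auto simp: lang_def)
  next
    case 2
    have u: "set u \<subseteq> {1..n}" using 2 lang_lists by (auto simp: in_lists_conv_set)
    have z: "set z \<subseteq> {..Suc n}" "Suc n \<notin> set z" using 2 by auto
    have "foldl step 0 (u @ Suc n # z) \<in> F \<union> {3..}"
      using foldl_step_new_letter[OF assms u z(1)] 2 z(2) by blast
    moreover have "set w \<subseteq> {1..Suc n}" using 2 u by auto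
    ultimately show ?thesis using 2 by (simp only: lang_def mem_Collect_eq)
  qed
qed

definition dfa_step :: "nat \<Rightarrow> nat \<Rightarrow> nat \<Rightarrow> nat" where
  "dfa_step n q a = (if a \<in> {1..n} then step q a else s)"

lemma is_dfa_dfa_step: "2 \<le> n \<Longrightarrow> finite Sig \<Longrightarrow> is_dfa {0..n} Sig (dfa_step n) 0 (F \<union> {3..n})"
  using step_le final_base sink_base by (auto simp: is_dfa_def dfa_step_def)

lemma foldl_dfa_step:
  "foldl (dfa_step n) q w = (if set w \<subseteq> {1..n} then foldl step q w else s)"
proof (induction w arbitrary: q)
  case (Cons a w)
  then show ?case by (simp add: dfa_step_def foldl_step_sink)
qed simp

lemma dfa_lang_dfa_step:
  assumes "2 \<le> n" and "{1..n} \<subseteq> Sig"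
  shows "dfa_lang Sig (dfa_step n) 0 (F \<union> {3..n}) = lang n"
  using assms foldl_step_le[OF assms(1), of 0] sink_base sink_not_final
  by (auto simp: dfa_lang_def lang_def foldl_dfa_step)

end

text \<open>With final states \<open>{0, 2}\<close> and sink \<open>1\<close>, resp. final state \<open>1\<close> and sink \<open>2\<close>,
  these accept \<open>\<epsilon> + 2 1\<^sup>*\<close> and \<open>1 (2 1)\<^sup>*\<close>.  The interpretations write \<open>Suc 0\<close>
  for \<open>1\<close>, its simp normal form, so that the unfolding rules of \<open>K\<close> and \<open>L\<close>
  match simplified terms.\<close>

definition base_K :: "nat \<Rightarrow> nat \<Rightarrow> nat" where
  "base_K q a = (if q = 0 then a else if a = 1 then 2 else 1)"

definition base_L :: "nat \<Rightarrow> nat \<Rightarrow> nat" where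
  "base_L q a = (if q = 0 \<and> a = 1 then 1 else if q = 1 \<and> a = 2 then 0 else 2)"

interpretation K: lifted_dfa base_K "{0, 2}" "Suc 0"
  by unfold_locales (auto simp: base_K_def)

interpretation L: lifted_dfa base_L "{Suc 0}" 2
  by unfold_locales (auto simp: base_L_def)

lemma set_subset_1_2: "set w \<subseteq> {1..2} \<Longrightarrow> set w \<subseteq> {1, 2::nat}"
  by auto

lemma K_step_base: "a \<in> {1, 2} \<Longrightarrow> K.step 0 a = a"
  "a \<in> {1, 2} \<Longrightarrow> K.step 2 a = (if a = 1 then 2 else 1)"
  by (auto simp: K.step_def base_K_def)

lemma L_step_base: "a \<in> {1, 2} \<Longrightarrow> L.step 0 a = (if a = 1 then 1 else 2)"
  "a \<in> {1, 2} \<Longrightarrow> L.step (Suc 0) a = (if a = 1 then 2 else 0)"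
  by (auto simp: L.step_def base_L_def)

lemma K_foldl_step_from_2:
  assumes "set v \<subseteq> {1, 2}" and "foldl K.step 2 v \<in> {0, 2} \<union> {3..}"
  shows "v = replicate (length v) 1"
  using assms
proof (induction v)
  case (Cons a v)
  then have "a = 1" using K.foldl_step_sink by (auto simp: K_step_base split: if_splits)
  then show ?case using Cons by (simp add: K_step_base)
qed simp

lemma K_lang_2: "w \<in> K.lang 2 \<Longrightarrow> w = [] \<or> (\<exists>k. w = 2 # replicate k 1)"
proof (cases w)
  case (Cons a v)
  assume w: "w \<in> K.lang 2"
  then have letters: "a \<in> {1, 2}" "set v \<subseteq> {1, 2}"
    using set_subset_1_2 by (auto simp: K.lang_def Cons)
  have accept: "foldl K.step (K.step 0 a) v \<in> {0, 2} \<union> {3..}"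
    using w by (simp add: K.lang_def Cons)
  have "a = 2" using letters accept K.foldl_step_sink by (auto simp: K_step_base)
  then show ?thesis using K_foldl_step_from_2 letters accept Cons by (auto simp: K_step_base)
qed simp

lemma L_lang_2: "w \<in> L.lang 2 \<Longrightarrow> \<exists>v. w = 1 # v"
proof (cases w)
  case Nil
  assume "w \<in> L.lang 2"
  then show ?thesis by (simp add: L.lang_def Nil)
next
  case (Cons a v)
  assume w: "w \<in> L.lang 2"
  then have "a \<in> {1, 2}"
    using set_subset_1_2 by (auto simp: L.lang_def Cons)
  moreover have "foldl L.step (L.step 0 a) v \<in> {1} \<union> {3..}"
    using w by (simp add: L.lang_def Cons)
  ultimately have "a = 1" using L.foldl_step_sink by (auto simp: L_step_base split: if_splits)
  then show ?thesis using Cons by blast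
qed

lemma K_L_disjoint_2: "K.lang 2 \<inter> L.lang 2 = {}"
  using K_lang_2 L_lang_2 by fastforce

lemma K_L_tower_2: "is_tower (K.lang 2) (L.lang 2) [[], [1], [2, 1], [1, 2, 1]]"
proof -
  have "[] \<in> K.lang 2" "[2, 1] \<in> K.lang 2" "[1] \<in> L.lang 2" "[1, 2, 1] \<in> L.lang 2"
    by (simp_all add: K.lang_def L.lang_def K_step_base L_step_base)
  then show ?thesis
    using K_L_disjoint_2 by (auto simp: is_tower_iff_successively tower_step_def)
qed

lemma K_L_disjoint: "2 \<le> n \<Longrightarrow> K.lang n \<inter> L.lang n = {}"
proof (induction n rule: nat_induct_at_least)
  case (Suc n)
  then show ?case
    by (simp add: K.lang_Suc L.lang_Suc extend_lang_disjoint[OF K.lang_lists L.lang_lists])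
qed (rule K_L_disjoint_2)

lemma K_L_tower:
  "2 \<le> n \<Longrightarrow> \<exists>ws. is_tower (K.lang n) (L.lang n) ws \<and> hd ws = [] \<and> last ws \<in> L.lang n
                 \<and> length ws = 2 ^ n"
proof (induction n rule: nat_induct_at_least)
  case base
  show ?case
    using K_L_tower_2 by (intro exI[of _ "[[], [1], [2, 1], [1, 2, 1]]"]) (simp add: L.lang_def L_step_base)
next
  case (Suc n)
  then obtain ws where ws: "is_tower (K.lang n) (L.lang n) ws" "hd ws = []" "last ws \<in> L.lang n"
    and "length ws = 2 ^ n" by blast
  have "[] \<in> K.lang n" by (simp add: K.lang_def)
  then have "is_tower (K.lang (Suc n)) (L.lang (Suc n)) (ws @ map (\<lambda>u. u @ Suc n # last ws) ws)"
    using is_tower_double[OF K.lang_lists L.lang_lists K_L_disjoint[OF Suc(1)] _ ws]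
    by (simp add: K.lang_Suc[OF Suc(1)] L.lang_Suc[OF Suc(1)])
  moreover have "set (last ws) \<subseteq> {1..n}"
    using ws(3) L.lang_lists by (auto simp: in_lists_conv_set)
  then have "last ws @ Suc n # last ws \<in> L.lang (Suc n)"
    using append_Cons_mem_extend_lang_iff[OF L.lang_lists] ws(3) by (simp add: L.lang_Suc[OF Suc(1)])
  moreover have "ws \<noteq> []" using ws(1) by (simp add: is_tower_def)
  ultimately show ?case
    using ws(2) \<open>length ws = 2 ^ n\<close>
    by (intro exI[of _ "ws @ map (\<lambda>u. u @ Suc n # last ws) ws"]) (simp add: last_map)
qed

lemma K_L_no_infinite_tower: "2 \<le> n \<Longrightarrow> \<not> is_infinite_tower (K.lang n) (L.lang n) w"
proof (induction n arbitrary: w rule: nat_induct_at_least)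
  case base
  have "K.lang 2 \<subseteq> insert [] (range (\<lambda>k. 2 # replicate k 1))"
    using K_lang_2 by blast
  moreover have "L.lang 2 \<subseteq> range ((#) 1)"
    using L_lang_2 by blast
  ultimately show ?case by (intro no_infinite_tower_two_letters) simp_all
next
  case (Suc n)
  then show ?case
    using no_infinite_tower_extend_lang[OF K.lang_lists L.lang_lists K_L_disjoint[OF Suc(1)]]
    by (simp add: K.lang_Suc L.lang_Suc)
qed

lemma foldl_const: "foldl (\<lambda>q a. p) q w = (if w = [] then q else p)"
  by (induction w arbitrary: q) auto

lemma constant_dfa_towers:
  assumes "n \<le> 1"
  defines "K \<equiv> dfa_lang {1..n + 1} (\<lambda>q a. n) 0 {0}"
    and "L \<equiv> dfa_lang {1..n + 1} (\<lambda>q a. n) 0 {1..n}"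
  shows "\<exists>ws. is_tower K L ws \<and> length ws = 2 ^ n" and "\<not> (\<exists>w. is_infinite_tower K L w)"
proof -
  have K: "K = {w. set w \<subseteq> {1..n + 1} \<and> (w = [] \<or> n = 0)}"
    and L: "L = {w. set w \<subseteq> {1..n + 1} \<and> w \<noteq> [] \<and> n = 1}"
    using assms(1) by (auto simp: K_def L_def dfa_lang_def foldl_const)
  consider "n = 0" | "n = 1" using assms(1) by linarith
  then show "\<exists>ws. is_tower K L ws \<and> length ws = 2 ^ n"
  proof cases
    case 1
    then show ?thesis by (intro exI[of _ "[[]]"]) (simp add: is_tower_def K)
  next
    case 2
    then show ?thesis by (intro exI[of _ "[[], [1]]"]) (simp add: is_tower_iff_successively tower_step_def K L)
  qed
  show "\<not> (\<exists>w. is_infinite_tower K L w)"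
    using no_infinite_tower_if_K_Nil[of K L] by (auto simp: K L)
qed

lemma le_triangular_number: "(n::nat) \<le> n * (n + 1) div 2 + 1"
proof (cases n)
  case (Suc m)
  have "n * 2 \<le> n * (n + 1)" using Suc by (intro mult_le_mono2) simp
  then have "n * 2 div 2 \<le> n * (n + 1) div 2" by (rule div_le_mono)
  then show ?thesis by simp
qed simp

theorem theorem11:
  fixes n :: nat
  shows "\<exists>(Sig :: nat set) (Q1 :: nat set) d1 s1 F1 (Q2 :: nat set) d2 s2 F2.
           card Sig = n * (n + 1) div 2 + 1 \<and>
           is_dfa Q1 Sig d1 s1 F1 \<and> card Q1 \<le> n + 1 \<and>
           is_dfa Q2 Sig d2 s2 F2 \<and> card Q2 \<le> n + 1 \<and>
           (\<exists>ws. is_tower (dfa_lang Sig d1 s1 F1) (dfa_lang Sig d2 s2 F2) ws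
                 \<and> length ws = 2 ^ n) \<and>
           \<not> (\<exists>w. is_infinite_tower (dfa_lang Sig d1 s1 F1) (dfa_lang Sig d2 s2 F2) w)"
proof (cases "n \<le> 1")
  case True
  have "card {1..n + 1} = n * (n + 1) div 2 + 1" using True by (auto simp: le_Suc_eq)
  moreover have "card {0..n} \<le> n + 1" by simp
  moreover have "is_dfa {0..n} {1..n + 1} (\<lambda>q a. n) 0 {0}"
    and "is_dfa {0..n} {1..n + 1} (\<lambda>q a. n) 0 {1..n}"
    by (simp_all add: is_dfa_def)
  ultimately show ?thesis
    using constant_dfa_towers[OF True] by blast
next
  case False
  then have n: "2 \<le> n" by simp
  let ?Sig = "{1..n * (n + 1) div 2 + 1}"
  have "{1..n} \<subseteq> ?Sig" using le_triangular_number[of n] by auto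
  then have langs: "dfa_lang ?Sig (K.dfa_step n) 0 ({0, 2} \<union> {3..n}) = K.lang n"
      "dfa_lang ?Sig (L.dfa_step n) 0 ({Suc 0} \<union> {3..n}) = L.lang n"
    using K.dfa_lang_dfa_step L.dfa_lang_dfa_step n by auto
  have "\<exists>ws. is_tower (K.lang n) (L.lang n) ws \<and> length ws = 2 ^ n"
    using K_L_tower[OF n] by blast
  moreover have "\<not> (\<exists>w. is_infinite_tower (K.lang n) (L.lang n) w)"
    using K_L_no_infinite_tower[OF n] by blast
  moreover have "card ?Sig = n * (n + 1) div 2 + 1" and "card {0..n} \<le> n + 1" by simp_all
  ultimately show ?thesis
    using K.is_dfa_dfa_step[OF n finite_atLeastAtMost] L.is_dfa_dfa_step[OF n finite_atLeastAtMost]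
    unfolding langs[symmetric] by blast
qed

end
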